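(* Let $n\ge 3$, $i\ge 0$, $1\le k\le n$, and $x^\Lambda\partial_k\in\mathcal{B}$. Then $x^\Lambda\partial_k\in\mathcal{L}_i\cap\mathcal{B}_k$ if and only if both of the following hold: (a) $n-k\le \mathrm{WD}(x^\Lambda\partial_k)<r_i$; (b) $i=\mathrm{lev}_i(x^\Lambda\partial_k)$.
   Context: Fix an integer $n\ge 3$. A partition is a sequence $\Lambda=(\lambda_j)_{j\ge1}$ of non-negative integers with finite support; $\mathrm{wt}(\Lambda)=\sum_j j\lambda_j$; $\mathrm{Part}(k)$ is the set of partitions with $\lambda_j=0$ for $j>k$. Write $x^\Lambda=\prod_j x_j^{\lambda_j}$, $\deg(x^\Lambda)=\sum_j\lambda_j$. $\mathcal{B}=\{x^\Lambda\partial_k : 1\le k\le n,\ \Lambda\in\mathrm{Part}(k-1)\}$ and $\mathcal{B}_u=\{x^\Lambda\partial_k\in\mathcal{B}: k=u\}$. For an integer $i\ge-1$, let $r_i\in\{1,\dots,n-1\}$ with $i\equiv r_i\pmod{n-1}$ and $h_i=\lfloor (i-1)/(n-1)\rfloor+1$. Define $\mathrm{WD}(x^\Lambda\partial_k)=\mathrm{wt}(\Lambda)-\deg(x^\Lambda)+n-k$ and $\mathrm{lev}_i(x^\Lambda\partial_k)=h_i\,\mathrm{WD}(x^\Lambda\partial_k)+\deg(x^\Lambda)-1$. For $i\ge-1$, $\mathcal{N}_i=\{b\in\mathcal{B}: \mathrm{lev}_j(b)\le j\text{ for some integer } -1\le j\le i\}$, and $\mathcal{L}_i=\mathcal{N}_i\setminus\mathcal{N}_{i-1}$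 for $i\ge0$. *)

theory Defs
  imports Main
begin

text \<open>A partition is a sequence (lambda_j)_{j>=1} of naturals with finite support; we model it
  as a function nat => nat whose value at index 0 is irrelevant and required to be 0.
  A basis element x^Lambda d_k is modelled as the pair (Lambda, k).\<close>

type_synonym partition = "nat \<Rightarrow> nat"
type_synonym basis_elt = "partition \<times> nat"

definition Part :: "nat \<Rightarrow> partition set" where
  "Part k = {\<Lambda>. \<forall>j. (j = 0 \<or> k < j) \<longrightarrow> \<Lambda> j = 0}"

definition wt :: "partition \<Rightarrow> nat" where
  "wt \<Lambda> = (\<Sum>j\<in>{j. \<Lambda> j \<noteq> 0}. j * \<Lambda> j)"

definition deg :: "partition \<Rightarrow> nat" where
  "deg \<Lambda> = (\<Sum>j\<in>{j. \<Lambda> j \<noteq> 0}. \<Lambda> j)"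

definition BB :: "nat \<Rightarrow> basis_elt set" where
  "BB n = {(\<Lambda>, k). 1 \<le> k \<and> k \<le> n \<and> \<Lambda> \<in> Part (k - 1)}"

definition BB_u :: "nat \<Rightarrow> nat \<Rightarrow> basis_elt set" where
  "BB_u n u = {b \<in> BB n. snd b = u}"

definition r_idx :: "nat \<Rightarrow> int \<Rightarrow> int" where
  "r_idx n i = (i - 1) mod (int n - 1) + 1"

definition h_idx :: "nat \<Rightarrow> int \<Rightarrow> int" where
  "h_idx n i = (i - 1) div (int n - 1) + 1"

definition WD :: "nat \<Rightarrow> basis_elt \<Rightarrow> int" where
  "WD n b = int (wt (fst b)) - int (deg (fst b)) + int n - int (snd b)"

definition lev :: "nat \<Rightarrow> int \<Rightarrow> basis_elt \<Rightarrow> int" where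
  "lev n i b = h_idx n i * WD n b + int (deg (fst b)) - 1"

definition NN :: "nat \<Rightarrow> int \<Rightarrow> basis_elt set" where
  "NN n i = {b \<in> BB n. \<exists>j::int. -1 \<le> j \<and> j \<le> i \<and> lev n j b \<le> j}"

definition LL :: "nat \<Rightarrow> int \<Rightarrow> basis_elt set" where
  "LL n i = NN n i - NN n (i - 1)"

end

theory Submission
  imports Defs
begin

text \<open>Write \<open>m = n - 1\<close>. Every index \<open>j\<close> lies in block \<open>h\<^sub>j\<close> at position \<open>r\<^sub>j\<close>,
  \<open>j = (h\<^sub>j - 1) m + r\<^sub>j\<close>, and \<open>lev\<^sub>j(b) = h\<^sub>j W + deg - 1\<close> with \<open>W = WD(b) \<ge> n - k \<ge> 0\<close>,
  so \<open>lev\<^sub>j(b)\<close> is nondecreasing in \<open>j\<close>. Membership in \<open>\<L>\<^sub>i\<close> says that \<open>i\<close> is the first index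
  with \<open>lev\<^sub>i(b) \<le> i\<close>. Comparing with the index \<open>i - 1\<close> forces \<open>lev\<^sub>i(b) = i\<close>; comparing with
  the last index \<open>i - r\<^sub>i\<close> of the previous block, where the level is smaller by exactly \<open>W\<close>,
  gives \<open>W < r\<^sub>i\<close>. Conversely, for \<open>j < i\<close> one has
  \<open>(i - lev\<^sub>i(b)) - (j - lev\<^sub>j(b)) = (h\<^sub>i - h\<^sub>j)(m - W) + r\<^sub>i - r\<^sub>j > 0\<close> as soon as \<open>W < r\<^sub>i \<le> m\<close>.
  For \<open>i = 0\<close> there is no previous block; there \<open>lev\<^sub>0(b) = 0\<close> means \<open>deg = 1\<close>, and then
  \<open>W \<le> n - 2 < r\<^sub>0\<close> because \<open>wt \<le> k - 1\<close>.\<close>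

lemma h_idx_mono: "2 \<le> n \<Longrightarrow> j \<le> i \<Longrightarrow> h_idx n j \<le> h_idx n i"
  by (simp add: h_idx_def zdiv_mono1)

lemma h_idx_pos: "2 \<le> n \<Longrightarrow> 1 \<le> i \<Longrightarrow> 1 \<le> h_idx n i"
  by (simp add: h_idx_def pos_imp_zdiv_nonneg_iff)

lemma h_idx_zero: "2 \<le> n \<Longrightarrow> h_idx n 0 = 0"
  by (simp add: h_idx_def div_eq_minus1)

lemma r_idx_zero: "2 \<le> n \<Longrightarrow> r_idx n 0 = int n - 1"
  by (simp add: r_idx_def zmod_minus1)

lemma r_idx_bounds:
  assumes "2 \<le> n"
  shows "1 \<le> r_idx n i \<and> r_idx n i \<le> int n - 1"
proof -
  have m: "0 < int n - 1" using assms by simp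
  show ?thesis
    unfolding r_idx_def using pos_mod_bound[OF m, of "i - 1"] pos_mod_sign[OF m, of "i - 1"]
    by linarith
qed

lemma h_idx_r_idx_decomp: "(h_idx n i - 1) * (int n - 1) + r_idx n i = i"
  by (simp add: h_idx_def r_idx_def mult.commute)

lemma r_idx_le:
  assumes "2 \<le> n" "1 \<le> i"
  shows "r_idx n i \<le> i"
proof -
  have "0 \<le> (h_idx n i - 1) * (int n - 1)"
    using h_idx_pos[OF assms] assms(1) by simp
  then show ?thesis
    using h_idx_r_idx_decomp[of n i] by linarith
qed

lemma h_idx_diff_r_idx:
  assumes "2 \<le> n"
  shows "h_idx n (i - r_idx n i) = h_idx n i - 1"
proof -
  let ?m = "int n - 1"
  have "i - r_idx n i - 1 = (h_idx n i - 2) * ?m + (?m - 1)"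
    using h_idx_r_idx_decomp[of n i] by (simp add: algebra_simps)
  then have "(i - r_idx n i - 1) div ?m = ((h_idx n i - 2) * ?m + (?m - 1)) div ?m"
    by (simp only:)
  also have "\<dots> = h_idx n i - 2"
    using assms by simp
  finally show ?thesis
    by (simp add: h_idx_def[of n "i - r_idx n i"])
qed

lemma lev_mono:
  assumes "2 \<le> n" "0 \<le> WD n b" "j \<le> i"
  shows "lev n j b \<le> lev n i b"
proof -
  have "h_idx n j * WD n b \<le> h_idx n i * WD n b"
    using assms by (intro mult_right_mono h_idx_mono)
  then show ?thesis
    by (simp add: lev_def)
qed

lemma mem_LL_iff:
  assumes "-1 \<le> i"
  shows "b \<in> LL n i \<longleftrightarrow>
           b \<in> BB n \<and> lev n i b \<le> i \<and> (\<forall>j. -1 \<le> j \<longrightarrow> j < i \<longrightarrow> j < lev n j b)"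
  using assms unfolding LL_def NN_def
  by (auto simp: not_le) (metis order_le_less zle_diff1_eq not_le)+

lemma lev_eq_of_first_index:
  assumes "2 \<le> n" "0 \<le> WD n b" "lev n i b \<le> i" "i - 1 < lev n (i - 1) b"
  shows "lev n i b = i"
  using lev_mono[OF assms(1,2), of "i - 1" i] assms(3,4) by simp

lemma WD_less_r_idx_of_first_index:
  assumes "2 \<le> n" "lev n i b = i" "i - r_idx n i < lev n (i - r_idx n i) b"
  shows "WD n b < r_idx n i"
proof -
  have "lev n (i - r_idx n i) b = (h_idx n i - 1) * WD n b + int (deg (fst b)) - 1"
    by (simp add: lev_def h_idx_diff_r_idx[OF assms(1)])
  also have "\<dots> = lev n i b - WD n b"
    by (simp add: lev_def algebra_simps)
  finally show ?thesis
    using assms(2,3) by simp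
qed

lemma less_lev_below_of_WD_less_r_idx:
  assumes n: "2 \<le> n" and W: "WD n b < r_idx n i" and i: "lev n i b = i" and "j < i"
  shows "j < lev n j b"
proof -
  define m where "m = int n - 1"
  define W where "W = WD n b"
  have decomp: "i = (h_idx n i - 1) * m + r_idx n i" "j = (h_idx n j - 1) * m + r_idx n j"
    using h_idx_r_idx_decomp m_def by metis+
  have rj: "r_idx n j \<le> m" and ri: "r_idx n i \<le> m"
    using r_idx_bounds[OF n] m_def by auto
  have "0 < (h_idx n i - h_idx n j) * (m - W) + r_idx n i - r_idx n j"
  proof (cases "h_idx n j = h_idx n i")
    case True
    then show ?thesis
      using decomp \<open>j < i\<close> by simp
  next
    case False
    then have "1 \<le> h_idx n i - h_idx n j"
      using h_idx_mono[OF n, of j i] \<open>j < i\<close> by linarith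
    moreover have "0 < m - W"
      using W ri W_def by simp
    ultimately have "m - W \<le> (h_idx n i - h_idx n j) * (m - W)"
      using mult_right_mono[of 1 "h_idx n i - h_idx n j" "m - W"] by simp
    then show ?thesis
      using W W_def rj by simp
  qed
  moreover have "(h_idx n i - h_idx n j) * (m - W) + r_idx n i - r_idx n j
                   = (lev n j b - j) - (lev n i b - i)"
    by (subst (3 4) decomp) (simp add: lev_def W_def algebra_simps)
  ultimately show ?thesis
    using i by simp
qed

lemma Part_support:
  assumes "\<Lambda> \<in> Part K"
  shows "{j. \<Lambda> j \<noteq> 0} \<subseteq> {1..K}"
proof
  fix j assume "j \<in> {j. \<Lambda> j \<noteq> 0}"
  moreover have "\<Lambda> 0 = 0" "\<And>j. K < j \<Longrightarrow> \<Lambda> j = 0"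
    using assms by (auto simp: Part_def)
  ultimately show "j \<in> {1..K}"
    by (cases "j = 0") (auto simp: not_less[symmetric])
qed

lemma deg_le_wt: "\<Lambda> \<in> Part K \<Longrightarrow> deg \<Lambda> \<le> wt \<Lambda>"
  unfolding deg_def wt_def by (rule sum_mono) (use Part_support in force)

lemma wt_le_mult_deg: "\<Lambda> \<in> Part K \<Longrightarrow> wt \<Lambda> \<le> K * deg \<Lambda>"
  unfolding deg_def wt_def sum_distrib_left by (rule sum_mono) (use Part_support in force)

lemma WD_lower_bound: "(\<Lambda>, k) \<in> BB n \<Longrightarrow> int n - int k \<le> WD n (\<Lambda>, k)"
  using deg_le_wt by (force simp: BB_def WD_def)

lemma WD_upper_bound_deg_one:
  assumes "(\<Lambda>, k) \<in> BB n" "deg \<Lambda> = 1"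
  shows "WD n (\<Lambda>, k) \<le> int n - 2"
proof -
  have "wt \<Lambda> \<le> k - 1" "1 \<le> k"
    using assms wt_le_mult_deg[of \<Lambda> "k - 1"] by (auto simp: BB_def)
  then have "int (wt \<Lambda>) \<le> int k - 1"
    by linarith
  then show ?thesis
    using assms(2) by (simp add: WD_def)
qed

lemma first_index_conditions:
  assumes n: "2 \<le> n" and b: "(\<Lambda>, k) \<in> BB n" and "0 \<le> i"
    and first: "lev n i (\<Lambda>, k) \<le> i" "\<forall>j. -1 \<le> j \<longrightarrow> j < i \<longrightarrow> j < lev n j (\<Lambda>, k)"
  shows "WD n (\<Lambda>, k) < r_idx n i \<and> lev n i (\<Lambda>, k) = i"
proof -
  have "0 \<le> WD n (\<Lambda>, k)"
    using WD_lower_bound[OF b] b by (simp add: BB_def)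
  then have lev_i: "lev n i (\<Lambda>, k) = i"
    using lev_eq_of_first_index[OF n _ first(1)] first(2) \<open>0 \<le> i\<close> by simp
  have "WD n (\<Lambda>, k) < r_idx n i"
  proof (cases "i = 0")
    case True
    then have "deg \<Lambda> = 1"
      using lev_i h_idx_zero[OF n] by (simp add: lev_def)
    then show ?thesis
      using WD_upper_bound_deg_one[OF b] r_idx_zero[OF n] True by simp
  next
    case False
    then have "-1 \<le> i - r_idx n i" "i - r_idx n i < i"
      using r_idx_le[OF n, of i] r_idx_bounds[OF n, of i] \<open>0 \<le> i\<close> by auto
    then show ?thesis
      using WD_less_r_idx_of_first_index[OF n lev_i] first(2) by simp
  qed
  with lev_i show ?thesis by simp
qed

theorem theorem2p15:
  fixes n k :: nat and i :: int and \<Lambda> :: partition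
  assumes "3 \<le> n" and "0 \<le> i" and "1 \<le> k" and "k \<le> n"
    and "(\<Lambda>, k) \<in> BB n"
  shows "(\<Lambda>, k) \<in> LL n i \<inter> BB_u n k \<longleftrightarrow>
           (int n - int k \<le> WD n (\<Lambda>, k) \<and> WD n (\<Lambda>, k) < r_idx n i)
         \<and> i = lev n i (\<Lambda>, k)"
proof -
  have n: "2 \<le> n"
    using assms(1) by simp
  have "(\<Lambda>, k) \<in> BB_u n k"
    using assms(5) by (simp add: BB_u_def)
  then show ?thesis
    using mem_LL_iff[of i] assms(2,5) WD_lower_bound[OF assms(5)]
      first_index_conditions[OF n assms(5,2)] less_lev_below_of_WD_less_r_idx[OF n]
    by auto
qed

end
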